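(* Let $n\ge 3$ and $m\ge 1$ be integers, and let $Q_{n,1},\dots,Q_{n,m}$ be the partition of $\{0,1,\dots,m+1\}^n$ defined below. Then each $Q_{n,i}$ is a connected $n$-dimensional tile.
   Context: Define $f:\{0,\dots,m+1\}^3\to\{1,\dots,m\}$ by: $f(x,y,z)=y$ if $0\le x\le m$, $1\le y\le m$, $z=0$; $f=x$ if $1\le x\le m$, $0\le y\le m$, $z=m+1$; $f=y$ if $x=0$, $1\le y\le m$, $1\le z\le m$; $f=x$ if $1\le x\le m$, $y=0$, $1\le z\le m$; $f=z$ if $1\le x\le m+1$, $1\le y\le m+1$, $1\le z\le m$; and $f=1$ at all remaining points. Let $f_3=f$ and for $n\ge4$: $f_n(x_1,\dots,x_n)=f_{n-1}(x_1,x_2,x_3,\dots,x_{n-1})$ if $0\le x_n\le m$, and $f_n(x_1,\dots,x_n)=f_{n-1}(m+1-x_2,x_1,x_3,\dots,x_{n-1})$ if $x_n=m+1$. Let $Q_{n,i}=\{x\in\{0,\dots,m+1\}^n: f_n(x)=i\}$. An $n$-dimensional tile is a non-empty finite subset of $\mathbb{Z}^n$; two disjoint sets are adjacent if some $p$ in the first and $q$ in the second satisfy $p+v=q$ for a unit vector $v$ parallel to an axis; a tile is connected if it cannot be partitioned into two non-adjacent sets. *)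

theory Defs
  imports Main
begin

text \<open>Points of Z^n are represented as int lists of length n; coordinate x_k is xs ! (k-1).\<close>

definition f3 :: "int \<Rightarrow> int \<Rightarrow> int \<Rightarrow> int \<Rightarrow> int" where
  "f3 m x y z =
    (if 0 \<le> x \<and> x \<le> m \<and> 1 \<le> y \<and> y \<le> m \<and> z = 0 then y
     else if 1 \<le> x \<and> x \<le> m \<and> 0 \<le> y \<and> y \<le> m \<and> z = m + 1 then x
     else if x = 0 \<and> 1 \<le> y \<and> y \<le> m \<and> 1 \<le> z \<and> z \<le> m then y
     else if 1 \<le> x \<and> x \<le> m \<and> y = 0 \<and> 1 \<le> z \<and> z \<le> m then x
     else if 1 \<le> x \<and> x \<le> m + 1 \<and> 1 \<le> y \<and> y \<le> m + 1 \<and> 1 \<le> z \<and> z \<le> m then z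
     else 1)"

text \<open>fF m k is f_{k+3}, applied to a list of length k+3.\<close>
primrec fF :: "int \<Rightarrow> nat \<Rightarrow> int list \<Rightarrow> int" where
  "fF m 0 xs = f3 m (xs ! 0) (xs ! 1) (xs ! 2)"
| "fF m (Suc k) xs =
     (let ys = butlast xs in
      if last xs \<le> m then fF m k ys
      else fF m k ((m + 1 - ys ! 1) # (ys ! 0) # drop 2 ys))"

definition fn :: "nat \<Rightarrow> nat \<Rightarrow> int list \<Rightarrow> int" where
  "fn m n xs = fF (int m) (n - 3) xs"

definition Q :: "nat \<Rightarrow> nat \<Rightarrow> int \<Rightarrow> int list set" where
  "Q m n i = {xs. length xs = n \<and> set xs \<subseteq> {0 .. int m + 1} \<and> fn m n xs = i}"

definition tile :: "nat \<Rightarrow> int list set \<Rightarrow> bool" where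
  "tile n T \<longleftrightarrow> T \<noteq> {} \<and> finite T \<and> (\<forall>p\<in>T. length p = n)"

definition unit_step :: "int list \<Rightarrow> int list \<Rightarrow> bool" where
  "unit_step p q \<longleftrightarrow> length q = length p \<and>
     (\<exists>k < length p. (q ! k = p ! k + 1 \<or> q ! k = p ! k - 1) \<and>
        (\<forall>j < length p. j \<noteq> k \<longrightarrow> q ! j = p ! j))"

definition adjacent :: "int list set \<Rightarrow> int list set \<Rightarrow> bool" where
  "adjacent A B \<longleftrightarrow> (\<exists>p\<in>A. \<exists>q\<in>B. unit_step p q)"

definition tile_connected :: "int list set \<Rightarrow> bool" where
  "tile_connected T \<longleftrightarrow>
     (\<forall>A B. A \<noteq> {} \<and> B \<noteq> {} \<and> A \<inter> B = {} \<and> A \<union> B = T \<longrightarrow> adjacent A B)"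

end

theory Submission
  imports Defs
begin

text \<open>
  Call a set lattice connected if any two of its points are joined by a path of unit
  steps inside it; this implies tile connectedness. \<open>Q\<^sub>3\<^sub>,\<^sub>i\<close> is a union of boxes
  (five of them, plus nine edges of the cube when \<open>i = 1\<close>), each lattice connected and
  adjacent to the next one. Slicing \<open>Q\<^sub>n\<^sub>+\<^sub>1\<^sub>,\<^sub>i\<close> by its last coordinate \<open>t\<close> gives a copy
  of \<open>Q\<^sub>n\<^sub>,\<^sub>i\<close> for \<open>t \<le> m\<close> and, for \<open>t = m + 1\<close>, a copy rotated by a quarter turn in the
  first two coordinates; both maps preserve unit steps. The points \<open>(1, 1, i, 0, \<dots>, 0, t)\<close>
  link consecutive slices, so \<open>Q\<^sub>n\<^sub>+\<^sub>1\<^sub>,\<^sub>i\<close> is lattice connected by induction on \<open>n\<close>.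
\<close>

lemma unit_step_Nil [simp]: "\<not> unit_step [] q" "\<not> unit_step p []"
  by (auto simp: unit_step_def)

lemma unit_step_Cons [simp]:
  "unit_step (a # p) (b # q) \<longleftrightarrow> (b = a + 1 \<or> b = a - 1) \<and> p = q \<or> b = a \<and> unit_step p q"
proof
  assume "unit_step (a # p) (b # q)"
  then obtain k where len: "length q = length p" and k: "k < Suc (length p)"
    and moved: "(b # q) ! k = (a # p) ! k + 1 \<or> (b # q) ! k = (a # p) ! k - 1"
    and fixed: "\<forall>j < Suc (length p). j \<noteq> k \<longrightarrow> (b # q) ! j = (a # p) ! j"
    unfolding unit_step_def by auto
  show "(b = a + 1 \<or> b = a - 1) \<and> p = q \<or> b = a \<and> unit_step p q"
  proof (cases k)
    case 0
    with len fixed have "p = q" by (intro nth_equalityI) (auto dest!: spec[of _ "Suc _"])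
    with 0 moved show ?thesis by simp
  next
    case (Suc k')
    have "\<forall>j < length p. j \<noteq> k' \<longrightarrow> q ! j = p ! j"
      using fixed Suc by (metis Suc_less_eq nat.inject nth_Cons_Suc)
    with Suc len k moved have "unit_step p q"
      unfolding unit_step_def by auto
    with Suc fixed show ?thesis by (auto dest!: spec[of _ 0])
  qed
next
  assume "(b = a + 1 \<or> b = a - 1) \<and> p = q \<or> b = a \<and> unit_step p q"
  then show "unit_step (a # p) (b # q)"
  proof
    assume "(b = a + 1 \<or> b = a - 1) \<and> p = q"
    then show ?thesis unfolding unit_step_def
      by (intro conjI exI[of _ 0]) (auto simp: nth_Cons split: nat.splits)
  next
    assume "b = a \<and> unit_step p q"
    then obtain k where "b = a" "length q = length p" "k < length p"
      "q ! k = p ! k + 1 \<or> q ! k = p ! k - 1" "\<forall>j < length p. j \<noteq> k \<longrightarrow> q ! j = p ! j"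
      unfolding unit_step_def by blast
    then show ?thesis unfolding unit_step_def
      by (intro conjI exI[of _ "Suc k"]) (auto simp: nth_Cons split: nat.splits)
  qed
qed

lemma unit_step_sym: "unit_step p q \<Longrightarrow> unit_step q p"
  unfolding unit_step_def by (metis diff_add_cancel add_diff_cancel)

lemma unit_step_append_same: "unit_step p q \<Longrightarrow> unit_step (p @ r) (q @ r)"
proof (induction p arbitrary: q)
  case (Cons a p)
  then show ?case by (cases q) auto
qed simp

lemma unit_step_same_append: "unit_step (p @ q) (p @ r) \<longleftrightarrow> unit_step q r"
  by (induction p) auto

definition unit_steps :: "int list rel" where
  "unit_steps = {(p, q). unit_step p q}"

definition lattice_connected :: "int list set \<Rightarrow> bool" where
  "lattice_connected S \<longleftrightarrow> S \<times> S \<subseteq> (Restr unit_steps S)\<^sup>*"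

lemma sym_Restr_unit_steps: "sym (Restr unit_steps S)"
  by (auto simp: sym_def unit_steps_def intro: unit_step_sym)

lemma lattice_connected_imp_tile_connected:
  assumes "lattice_connected T"
  shows "tile_connected T"
  unfolding tile_connected_def
proof (intro allI impI)
  fix A B assume part: "A \<noteq> {} \<and> B \<noteq> {} \<and> A \<inter> B = {} \<and> A \<union> B = T"
  then obtain a b where "a \<in> A" "b \<in> B" by blast
  show "adjacent A B"
  proof (rule ccontr)
    assume "\<not> adjacent A B"
    then have "Restr unit_steps T `` A \<subseteq> A"
      using part by (auto simp: adjacent_def unit_steps_def)
    then have "(Restr unit_steps T)\<^sup>* `` A = A"
      by (rule Image_closed_trancl)
    moreover have "(a, b) \<in> (Restr unit_steps T)\<^sup>*"
      using assms part \<open>a \<in> A\<close> \<open>b \<in> B\<close> by (auto simp: lattice_connected_def)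
    ultimately show False
      using part \<open>a \<in> A\<close> \<open>b \<in> B\<close> by blast
  qed
qed

lemma adjacent_mono: "adjacent A B \<Longrightarrow> A \<subseteq> A' \<Longrightarrow> B \<subseteq> B' \<Longrightarrow> adjacent A' B'"
  by (auto simp: adjacent_def)

lemma lattice_connected_Un:
  assumes S: "lattice_connected S" and T: "lattice_connected T" and "adjacent S T"
  shows "lattice_connected (S \<union> T)"
proof -
  let ?R = "(Restr unit_steps (S \<union> T))\<^sup>*"
  obtain p q where "p \<in> S" "q \<in> T" "unit_step p q"
    using \<open>adjacent S T\<close> by (auto simp: adjacent_def)
  then have pq: "(p, q) \<in> ?R"
    by (auto simp: unit_steps_def)
  have "(Restr unit_steps A)\<^sup>* \<subseteq> ?R" if "A \<subseteq> S \<union> T" for A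
    using that by (intro rtrancl_mono) auto
  then have SS: "S \<times> S \<subseteq> ?R" and TT: "T \<times> T \<subseteq> ?R"
    using S T unfolding lattice_connected_def by blast+
  have ST: "S \<times> T \<subseteq> ?R"
  proof clarify
    fix x y assume "x \<in> S" "y \<in> T"
    with SS TT \<open>p \<in> S\<close> \<open>q \<in> T\<close> have "(x, p) \<in> ?R" "(q, y) \<in> ?R" by auto
    with pq show "(x, y) \<in> ?R" by (meson rtrancl_trans)
  qed
  have "sym ?R"
    by (intro sym_rtrancl sym_Restr_unit_steps)
  with ST have "T \<times> S \<subseteq> ?R"
    by (auto dest: symD)
  with SS TT ST show ?thesis
    by (auto simp: lattice_connected_def)
qed

lemma lattice_connected_image:
  assumes "lattice_connected S"
    and steps: "\<And>p q. p \<in> S \<Longrightarrow> q \<in> S \<Longrightarrow> unit_step p q \<Longrightarrow> unit_step (g p) (g q)"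
  shows "lattice_connected (g ` S)"
proof -
  have "(g p, g q) \<in> (Restr unit_steps (g ` S))\<^sup>*"
    if "(p, q) \<in> (Restr unit_steps S)\<^sup>*" for p q
    using that
  proof (induction rule: rtrancl_induct)
    case (step y z)
    then have "(g y, g z) \<in> Restr unit_steps (g ` S)"
      using steps by (auto simp: unit_steps_def)
    with step.IH show ?case by (rule rtrancl_into_rtrancl)
  qed simp
  with assms(1) show ?thesis
    by (auto simp: lattice_connected_def)
qed

lemma lattice_connected_Union_successively:
  assumes "\<forall>S \<in> set Ss. lattice_connected S" and "successively adjacent Ss"
  shows "lattice_connected (\<Union> (set Ss))"
  using assms
proof (induction Ss)
  case (Cons S Ss)
  show ?case
  proof (cases "Ss = []")
    case False
    then have "hd Ss \<subseteq> \<Union> (set Ss)"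
      by (simp add: Union_upper)
    with False Cons.prems have "adjacent S (\<Union> (set Ss))"
      by (auto simp: successively_Cons elim!: adjacent_mono)
    moreover have "lattice_connected (\<Union> (set Ss))"
      using False Cons.IH Cons.prems by (simp add: successively_Cons)
    ultimately show ?thesis
      using Cons.prems lattice_connected_Un by simp
  qed (use Cons.prems in simp)
qed (simp add: lattice_connected_def)

lemma lattice_connected_UN_interval:
  fixes a b :: int
  assumes "\<And>t. a \<le> t \<Longrightarrow> t \<le> b \<Longrightarrow> lattice_connected (F t)"
    and "\<And>t. a \<le> t \<Longrightarrow> t < b \<Longrightarrow> adjacent (F t) (F (t + 1))"
  shows "lattice_connected (\<Union>t \<in> {a..b}. F t)"
proof (cases "a \<le> b")
  case True
  then show ?thesis
    using assms
  proof (induction b rule: int_ge_induct)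
    case base
    then show ?case by simp
  next
    case (step b)
    have "adjacent (\<Union>t \<in> {a..b}. F t) (F (b + 1))"
      using step.prems(2)[of b] step.hyps by (auto elim!: adjacent_mono)
    moreover have "(\<Union>t \<in> {a..b + 1}. F t) = (\<Union>t \<in> {a..b}. F t) \<union> F (b + 1)"
    proof -
      have "{a..b + 1} = insert (b + 1) {a..b}"
        using step.hyps by auto
      then show ?thesis by auto
    qed
    ultimately show ?case
      using step by (simp add: lattice_connected_Un)
  qed
qed (simp add: lattice_connected_def)

definition box :: "int list \<Rightarrow> int list \<Rightarrow> int list set" where
  "box lo hi = {xs. list_all2 (\<le>) lo xs \<and> list_all2 (\<le>) xs hi}"

lemma box_Nil_Cons [simp]: "box [] (b # hi) = {}" and box_Cons_Nil [simp]: "box (a # lo) [] = {}"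
  by (auto simp: box_def)

lemma mem_box_Nil [simp]: "xs \<in> box [] [] \<longleftrightarrow> xs = []"
  by (auto simp: box_def)

lemma mem_box_Cons [simp]:
  "xs \<in> box (a # lo) (b # hi) \<longleftrightarrow> (\<exists>x ys. xs = x # ys \<and> a \<le> x \<and> x \<le> b \<and> ys \<in> box lo hi)"
  by (auto simp: box_def list_all2_Cons1)

lemma Cons_mem_box_Cons [simp]: "x # xs \<in> box (a # lo) (b # hi) \<longleftrightarrow> a \<le> x \<and> x \<le> b \<and> xs \<in> box lo hi"
  by simp

lemma Bex_box_Nil [simp]: "(\<exists>p \<in> box [] []. P p) \<longleftrightarrow> P []"
  by (auto simp: Bex_def)

lemma Bex_box_Cons [simp]:
  "(\<exists>p \<in> box (a # lo) (b # hi). P p) \<longleftrightarrow> (\<exists>x. a \<le> x \<and> x \<le> b \<and> (\<exists>ys \<in> box lo hi. P (x # ys)))"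
  by (auto simp: Bex_def)

lemma box_Cons: "box (a # lo) (b # hi) = (\<Union>t \<in> {a..b}. (#) t ` box lo hi)"
  by (auto simp: image_iff)

lemma lattice_connected_box: "lattice_connected (box lo hi)"
proof (induction lo arbitrary: hi)
  case Nil
  show ?case
    by (cases hi) (auto simp: lattice_connected_def)
next
  case (Cons a lo)
  show ?case
  proof (cases hi)
    case Nil
    then show ?thesis by (simp add: lattice_connected_def)
  next
    case hi: (Cons b hi')
    show ?thesis
    proof (cases "box lo hi' = {}")
      case True
      with hi show ?thesis by (simp add: box_Cons lattice_connected_def)
    next
      case False
      then obtain p where "p \<in> box lo hi'" by blast
      show ?thesis
        unfolding hi box_Cons
      proof (rule lattice_connected_UN_interval)
        fix t
        show "lattice_connected ((#) t ` box lo hi')"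
          by (rule lattice_connected_image[OF Cons.IH]) simp
        show "adjacent ((#) t ` box lo hi') ((#) (t + 1) ` box lo hi')"
          using \<open>p \<in> box lo hi'\<close> by (auto simp: adjacent_def)
      qed
    qed
  qed
qed

lemma Cons3_in_Q3_iff:
  "[x, y, z] \<in> Q m 3 i \<longleftrightarrow> 0 \<le> x \<and> x \<le> int m + 1 \<and> 0 \<le> y \<and> y \<le> int m + 1 \<and>
     0 \<le> z \<and> z \<le> int m + 1 \<and> f3 (int m) x y z = i"
  by (auto simp: Q_def fn_def)

lemma length_eq_3_conv: "length xs = 3 \<longleftrightarrow> (\<exists>x y z. xs = [x, y, z])"
  by (auto simp: numeral_3_eq_3 length_Suc_conv)

text \<open>
  The first five boxes are where \<open>f3\<close> takes the value \<open>i\<close> through one of its first five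
  clauses; for \<open>i = 1\<close> the other nine are the edges of the cube on which it defaults to \<open>1\<close>.
  They are listed so that consecutive boxes are adjacent.
\<close>

definition Q3_boxes :: "int \<Rightarrow> int \<Rightarrow> int list set list" where
  "Q3_boxes M i =
     [box [0, i, 0] [M, i, 0], box [0, i, 1] [0, i, M], box [1, 1, i] [M + 1, M + 1, i],
      box [i, 0, 1] [i, 0, M], box [i, 0, M + 1] [i, M, M + 1]] @
     (if i = 1 then
       [box [0, M + 1, M + 1] [M + 1, M + 1, M + 1], box [M + 1, 0, M + 1] [M + 1, M + 1, M + 1],
        box [M + 1, 0, 1] [M + 1, 0, M], box [0, 0, 0] [M + 1, 0, 0], box [0, 0, 1] [0, 0, M],
        box [0, 0, M + 1] [0, M + 1, M + 1], box [0, M + 1, 1] [0, M + 1, M],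
        box [0, M + 1, 0] [M + 1, M + 1, 0], box [M + 1, 0, 0] [M + 1, M + 1, 0]]
      else [])"

lemma Q3_eq_Union_boxes:
  assumes "1 \<le> i" "i \<le> int m"
  shows "Q m 3 i = \<Union> (set (Q3_boxes (int m) i))"
proof (intro set_eqI iffI)
  fix xs assume xs: "xs \<in> Q m 3 i"
  then obtain x y z where xyz: "xs = [x, y, z]"
    by (auto simp: Q_def length_eq_3_conv)
  have trichotomy: "c = 0 \<or> c = int m + 1 \<or> 1 \<le> c \<and> c \<le> int m"
    if "0 \<le> c" "c \<le> int m + 1" for c
    using that by auto
  from xs have "x = 0 \<or> x = int m + 1 \<or> 1 \<le> x \<and> x \<le> int m"
    "y = 0 \<or> y = int m + 1 \<or> 1 \<le> y \<and> y \<le> int m"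
    "z = 0 \<or> z = int m + 1 \<or> 1 \<le> z \<and> z \<le> int m"
    and "f3 (int m) x y z = i"
    unfolding xyz Cons3_in_Q3_iff by (auto intro!: trichotomy)
  then show "xs \<in> \<Union> (set (Q3_boxes (int m) i))"
    using assms unfolding xyz Q3_boxes_def f3_def by (elim disjE conjE; simp)
next
  fix xs assume xs: "xs \<in> \<Union> (set (Q3_boxes (int m) i))"
  then obtain x y z where xyz: "xs = [x, y, z]"
    by (auto simp: Q3_boxes_def split: if_splits)
  from xs assms show "xs \<in> Q m 3 i"
    unfolding xyz Q3_boxes_def
    by (cases "i = 1"; simp; elim disjE conjE; simp add: Cons3_in_Q3_iff f3_def)
qed

lemma lattice_connected_Q3:
  assumes "1 \<le> i" "i \<le> int m"
  shows "lattice_connected (Q m 3 i)"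
proof -
  have "successively adjacent (Q3_boxes (int m) i)"
    using assms unfolding Q3_boxes_def adjacent_def
    by simp presburger
  then show ?thesis
    unfolding Q3_eq_Union_boxes[OF assms]
    by (intro lattice_connected_Union_successively) (auto simp: Q3_boxes_def lattice_connected_box)
qed

text \<open>The quarter turn by which \<open>f\<^sub>n\<^sub>+\<^sub>1\<close> reduces to \<open>f\<^sub>n\<close> on the slice \<open>x\<^sub>n\<^sub>+\<^sub>1 = m + 1\<close>, and its inverse.\<close>

definition turn :: "int \<Rightarrow> int list \<Rightarrow> int list" where
  "turn M ys = (M + 1 - ys ! 1) # ys ! 0 # drop 2 ys"

definition unturn :: "int \<Rightarrow> int list \<Rightarrow> int list" where
  "unturn M ys = ys ! 1 # (M + 1 - ys ! 0) # drop 2 ys"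

lemma turn_Cons_Cons [simp]: "turn M (a # b # r) = (M + 1 - b) # a # r"
  by (simp add: turn_def)

lemma unturn_Cons_Cons [simp]: "unturn M (a # b # r) = b # (M + 1 - a) # r"
  by (simp add: unturn_def)

lemma length_ge_2_conv: "2 \<le> length xs \<longleftrightarrow> (\<exists>a b r. xs = a # b # r)"
  by (auto simp: numeral_2_eq_2 Suc_le_length_iff)

lemma turn_unturn: "2 \<le> length ys \<Longrightarrow> turn M (unturn M ys) = ys"
  by (auto simp: length_ge_2_conv)

lemma unturn_turn: "2 \<le> length ys \<Longrightarrow> unturn M (turn M ys) = ys"
  by (auto simp: length_ge_2_conv)

lemma set_turn_subset_iff:
  "2 \<le> length ys \<Longrightarrow> set (turn M ys) \<subseteq> {0..M + 1} \<longleftrightarrow> set ys \<subseteq> {0..M + 1}"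
  by (auto simp: length_ge_2_conv subset_iff)

lemma length_turn: "2 \<le> length ys \<Longrightarrow> length (turn M ys) = length ys"
  by (auto simp: length_ge_2_conv)

lemma length_unturn: "2 \<le> length ys \<Longrightarrow> length (unturn M ys) = length ys"
  by (auto simp: length_ge_2_conv)

lemma unit_step_unturn:
  assumes "2 \<le> length p" "unit_step p q"
  shows "unit_step (unturn M p) (unturn M q)"
proof -
  have "length q = length p"
    using \<open>unit_step p q\<close> by (simp add: unit_step_def)
  with assms obtain a b r a' b' r' where "p = a # b # r" "q = a' # b' # r'"
    by (metis length_ge_2_conv)
  with \<open>unit_step p q\<close> show ?thesis
    by auto
qed

lemma fn_snoc:
  assumes "n \<ge> 3" "length ys = n"
  shows "fn m (Suc n) (ys @ [t]) = (if t \<le> int m then fn m n ys else fn m n (turn (int m) ys))"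
proof -
  have "Suc n - 3 = Suc (n - 3)"
    using assms by simp
  then show ?thesis
    using assms by (simp add: fn_def turn_def Let_def)
qed

lemma fn_replicate_0:
  assumes "n \<ge> 3"
  shows "fn m n (a # b # c # replicate (n - 3) 0) = f3 (int m) a b c"
  using assms
proof (induction n rule: nat_induct_at_least)
  case base
  then show ?case by (simp add: fn_def)
next
  case (Suc n)
  have "Suc n - 3 = Suc (n - 3)"
    using Suc.hyps by simp
  then have "a # b # c # replicate (Suc n - 3) 0 = (a # b # c # replicate (n - 3) 0) @ [0]"
    by (simp add: replicate_append_same)
  with Suc fn_snoc[of n "a # b # c # replicate (n - 3) 0"] show ?case
    by simp
qed

lemma base_point_in_Q:
  assumes "n \<ge> 3" "1 \<le> c" "c \<le> int m" "1 \<le> i" "i \<le> int m"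
  shows "c # 1 # i # replicate (n - 3) 0 \<in> Q m n i"
  using assms by (auto simp: Q_def fn_replicate_0 f3_def)

lemma finite_Q: "finite (Q m n i)"
  by (rule finite_subset[OF _ finite_lists_length_eq[of "{0..int m + 1}" n]]) (auto simp: Q_def)

definition Q_slice :: "nat \<Rightarrow> nat \<Rightarrow> int \<Rightarrow> int \<Rightarrow> int list set" where
  "Q_slice m n i t = {xs \<in> Q m n i. last xs = t}"

lemma Q_eq_UN_Q_slice: "Q m (Suc n) i = (\<Union>t \<in> {0..int m + 1}. Q_slice m (Suc n) i t)"
proof -
  have "last xs \<in> {0..int m + 1}" if "xs \<in> Q m (Suc n) i" for xs
  proof -
    from that have "xs \<noteq> []" "set xs \<subseteq> {0..int m + 1}"
      by (auto simp: Q_def)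
    then show ?thesis
      using last_in_set by blast
  qed
  then show ?thesis
    by (auto simp: Q_slice_def)
qed

lemma Q_SucE:
  assumes "xs \<in> Q m (Suc n) i"
  obtains ys where "xs = ys @ [last xs]" "length ys = n"
proof -
  from assms have "xs \<noteq> []" "length xs = Suc n"
    by (auto simp: Q_def)
  then show ?thesis
    by (intro that[of "butlast xs"]) auto
qed

lemma Q_slice_eq_image_snoc:
  assumes "n \<ge> 3" "0 \<le> t" "t \<le> int m"
  shows "Q_slice m (Suc n) i t = (\<lambda>ys. ys @ [t]) ` Q m n i"
proof (intro set_eqI iffI)
  fix xs assume "xs \<in> Q_slice m (Suc n) i t"
  then obtain ys where "xs = ys @ [t]" "length ys = n" "ys @ [t] \<in> Q m (Suc n) i"
    unfolding Q_slice_def by (metis (mono_tags) Q_SucE mem_Collect_eq)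
  moreover from this assms have "ys \<in> Q m n i"
    using fn_snoc[OF assms(1) \<open>length ys = n\<close>] by (simp add: Q_def)
  ultimately show "xs \<in> (\<lambda>ys. ys @ [t]) ` Q m n i"
    by blast
next
  fix xs assume "xs \<in> (\<lambda>ys. ys @ [t]) ` Q m n i"
  then obtain ys where "ys \<in> Q m n i" "xs = ys @ [t]"
    by blast
  with assms show "xs \<in> Q_slice m (Suc n) i t"
    using fn_snoc[OF assms(1), of ys m t] by (simp add: Q_slice_def Q_def)
qed

lemma Q_slice_top_eq_image_unturn:
  assumes "n \<ge> 3"
  shows "Q_slice m (Suc n) i (int m + 1) = (\<lambda>ys. unturn (int m) ys @ [int m + 1]) ` Q m n i"
proof (intro set_eqI iffI)
  fix xs assume "xs \<in> Q_slice m (Suc n) i (int m + 1)"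
  then obtain ys where ys: "xs = ys @ [int m + 1]" "length ys = n" "ys @ [int m + 1] \<in> Q m (Suc n) i"
    unfolding Q_slice_def by (metis (mono_tags) Q_SucE mem_Collect_eq)
  then have "2 \<le> length ys"
    using assms by simp
  moreover from ys(3) have "set ys \<subseteq> {0..int m + 1}" "fn m (Suc n) (ys @ [int m + 1]) = i"
    by (simp_all add: Q_def)
  ultimately have "turn (int m) ys \<in> Q m n i"
    using fn_snoc[OF assms ys(2)] ys(2) by (simp add: Q_def set_turn_subset_iff length_turn)
  moreover have "xs = unturn (int m) (turn (int m) ys) @ [int m + 1]"
    using ys(1) unturn_turn[OF \<open>2 \<le> length ys\<close>] by simp
  ultimately show "xs \<in> (\<lambda>ys. unturn (int m) ys @ [int m + 1]) ` Q m n i"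
    by blast
next
  fix xs assume "xs \<in> (\<lambda>ys. unturn (int m) ys @ [int m + 1]) ` Q m n i"
  then obtain v where v: "v \<in> Q m n i" "xs = unturn (int m) v @ [int m + 1]"
    by blast
  define u where "u = unturn (int m) v"
  have "length v = n" "2 \<le> length v"
    using v(1) assms by (simp_all add: Q_def)
  then have "length u = n" "turn (int m) u = v"
    by (simp_all add: u_def length_unturn turn_unturn)
  then have "u @ [int m + 1] \<in> Q m (Suc n) i"
    using v(1) assms fn_snoc[OF assms \<open>length u = n\<close>]
    by (simp add: Q_def flip: set_turn_subset_iff[of u])
  with v(2) show "xs \<in> Q_slice m (Suc n) i (int m + 1)"
    by (simp add: Q_slice_def u_def)
qed

lemma lattice_connected_Q_slice:
  assumes "n \<ge> 3" "lattice_connected (Q m n i)" "0 \<le> t" "t \<le> int m + 1"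
  shows "lattice_connected (Q_slice m (Suc n) i t)"
proof (cases "t \<le> int m")
  case True
  show ?thesis
    unfolding Q_slice_eq_image_snoc[OF assms(1,3) True]
    by (rule lattice_connected_image[OF assms(2)]) (simp add: unit_step_append_same)
next
  case False
  with assms have "t = int m + 1" by simp
  have "2 \<le> length p" if "p \<in> Q m n i" for p
    using that assms by (simp add: Q_def)
  then show ?thesis
    unfolding \<open>t = int m + 1\<close> Q_slice_top_eq_image_unturn[OF assms(1)]
    by (intro lattice_connected_image[OF assms(2)] unit_step_append_same unit_step_unturn)
qed

lemma base_point_snoc_in_Q_slice:
  assumes "n \<ge> 3" "1 \<le> i" "i \<le> int m" "0 \<le> t" "t \<le> int m + 1"
  shows "(1 # 1 # i # replicate (n - 3) 0) @ [t] \<in> Q_slice m (Suc n) i t"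
proof (cases "t \<le> int m")
  case True
  have "1 # 1 # i # replicate (n - 3) 0 \<in> Q m n i"
    using assms by (intro base_point_in_Q) auto
  then show ?thesis
    unfolding Q_slice_eq_image_snoc[OF assms(1,4) True] by blast
next
  case False
  with assms have "t = int m + 1" by simp
  have "int m # 1 # i # replicate (n - 3) 0 \<in> Q m n i"
    using assms by (intro base_point_in_Q) auto
  moreover have "1 # 1 # i # replicate (n - 3) 0 = unturn (int m) (int m # 1 # i # replicate (n - 3) 0)"
    by simp
  ultimately show ?thesis
    unfolding \<open>t = int m + 1\<close> Q_slice_top_eq_image_unturn[OF assms(1)] by blast
qed

lemma adjacent_Q_slice_Suc:
  assumes "n \<ge> 3" "1 \<le> i" "i \<le> int m" "0 \<le> t" "t \<le> int m"
  shows "adjacent (Q_slice m (Suc n) i t) (Q_slice m (Suc n) i (t + 1))"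
proof -
  let ?w = "1 # 1 # i # replicate (n - 3) 0"
  have "unit_step (?w @ [t]) (?w @ [t + 1])"
    by (simp add: unit_step_same_append)
  moreover have "?w @ [t] \<in> Q_slice m (Suc n) i t" "?w @ [t + 1] \<in> Q_slice m (Suc n) i (t + 1)"
    using assms by (auto intro!: base_point_snoc_in_Q_slice simp del: append_Cons)
  ultimately show ?thesis
    unfolding adjacent_def by blast
qed

lemma lattice_connected_Q:
  assumes "n \<ge> 3" "1 \<le> i" "i \<le> int m"
  shows "lattice_connected (Q m n i)"
  using assms(1)
proof (induction n rule: nat_induct_at_least)
  case base
  show ?case
    using assms by (simp add: lattice_connected_Q3)
next
  case (Suc n)
  show ?case
    unfolding Q_eq_UN_Q_slice
    using Suc assms by (intro lattice_connected_UN_interval lattice_connected_Q_slice adjacent_Q_slice_Suc) auto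
qed

theorem lemma5p2:
  fixes m n :: nat and i :: int
  assumes "n \<ge> 3" and "m \<ge> 1" and "1 \<le> i" and "i \<le> int m"
  shows "tile n (Q m n i) \<and> tile_connected (Q m n i)"
proof
  have "1 # 1 # i # replicate (n - 3) 0 \<in> Q m n i"
    using assms by (intro base_point_in_Q) auto
  then have "Q m n i \<noteq> {}"
    by blast
  then show "tile n (Q m n i)"
    unfolding tile_def using finite_Q by (simp add: Q_def)
  show "tile_connected (Q m n i)"
    using assms by (intro lattice_connected_imp_tile_connected lattice_connected_Q)
qed

end
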